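(* Let $R$ be a commutative ring and $M$ a semisimple $R$-module that has a minimal second representation $M=\sum_{i=1}^n K_i$ whose set of main second attached primes $att^s(M)=\{Ann(K_1),\dots,Ann(K_n)\}$ satisfies $att^s(M)=Min(att^s(M))$ (i.e. these ideals are pairwise incomparable). Then the following are equivalent: (1) $M$ is a multiplication module; (2) every PS-hollow submodule of $M$ is simple; (3) every second submodule of $M$ is simple; (4) $M$ is a comultiplication module.
   Context: A submodule $N\neq 0$ of $M$ is second iff for every ideal $I\leq R$, $IN=N$ or $IN=0$. A second representation of $M$ is an expression $M=\sum_{i=1}^n K_i$ with each $K_i$ a second submodule; it is minimal if the ideals $Ann(K_i)$ are pairwise distinct and no $K_j$ is contained in $\sum_{i\neq j}K_i$. $Min(X)$ denotes the set of minimal elements of a set of ideals $X$ w.r.t. inclusion. An $R$-submodule $N\leq M$ is PS-hollow iff for every ideal $I\leq R$ and every submodule $L\leq M$: $N\subseteq IM+L$ implies $N\subseteq IM$ or $N\subseteq L$. $M$ is multiplication iff every submodule is $IM$ for some ideal $I$; $M$ is comultiplication iff $K=(0:_M(0:_R K))$ for every submodule $K\leq M$. *)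

theory Defs
  imports Main "HOL.Modules"
begin

text \<open>Setting: R is the commutative ring given by a type 'a::comm_ring_1, M is the whole
  carrier of type 'm::ab_group_add, and scale is the R-action; 'module scale' holds.\<close>

definition submod :: "('a::comm_ring_1 \<Rightarrow> 'm::ab_group_add \<Rightarrow> 'm) \<Rightarrow> 'm set \<Rightarrow> bool" where
  "submod scale N \<longleftrightarrow> module.subspace scale N"

definition ring_ideal :: "'a::comm_ring_1 set \<Rightarrow> bool" where
  "ring_ideal I \<longleftrightarrow> module.subspace ((*) :: 'a \<Rightarrow> 'a \<Rightarrow> 'a) I"

definition ideal_mult :: "('a::comm_ring_1 \<Rightarrow> 'm::ab_group_add \<Rightarrow> 'm) \<Rightarrow> 'a set \<Rightarrow> 'm set \<Rightarrow> 'm set" where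
  "ideal_mult scale I N = module.span scale {scale r x | r x. r \<in> I \<and> x \<in> N}"

definition sum_submod :: "'m::ab_group_add set \<Rightarrow> 'm set \<Rightarrow> 'm set" where
  "sum_submod A B = {a + b | a b. a \<in> A \<and> b \<in> B}"

definition Ann :: "('a::comm_ring_1 \<Rightarrow> 'm::ab_group_add \<Rightarrow> 'm) \<Rightarrow> 'm set \<Rightarrow> 'a set" where
  "Ann scale K = {r. \<forall>x\<in>K. scale r x = 0}"

definition colon_M :: "('a::comm_ring_1 \<Rightarrow> 'm::ab_group_add \<Rightarrow> 'm) \<Rightarrow> 'a set \<Rightarrow> 'm set" where
  "colon_M scale I = {x. \<forall>r\<in>I. scale r x = 0}"

definition simple_submod :: "('a::comm_ring_1 \<Rightarrow> 'm::ab_group_add \<Rightarrow> 'm) \<Rightarrow> 'm set \<Rightarrow> bool" where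
  "simple_submod scale N \<longleftrightarrow> submod scale N \<and> N \<noteq> {0} \<and>
     (\<forall>L. submod scale L \<and> L \<subseteq> N \<longrightarrow> L = {0} \<or> L = N)"

definition second_submod :: "('a::comm_ring_1 \<Rightarrow> 'm::ab_group_add \<Rightarrow> 'm) \<Rightarrow> 'm set \<Rightarrow> bool" where
  "second_submod scale N \<longleftrightarrow> submod scale N \<and> N \<noteq> {0} \<and>
     (\<forall>I. ring_ideal I \<longrightarrow> ideal_mult scale I N = N \<or> ideal_mult scale I N = {0})"

text \<open>PS-hollow submodule (taken to be nonzero); IM means I times the whole module.\<close>
definition ps_hollow :: "('a::comm_ring_1 \<Rightarrow> 'm::ab_group_add \<Rightarrow> 'm) \<Rightarrow> 'm set \<Rightarrow> bool" where
  "ps_hollow scale N \<longleftrightarrow> submod scale N \<and> N \<noteq> {0} \<and>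
     (\<forall>I L. ring_ideal I \<and> submod scale L \<longrightarrow>
        N \<subseteq> sum_submod (ideal_mult scale I UNIV) L \<longrightarrow>
        N \<subseteq> ideal_mult scale I UNIV \<or> N \<subseteq> L)"

definition multiplication_module :: "('a::comm_ring_1 \<Rightarrow> 'm::ab_group_add \<Rightarrow> 'm) \<Rightarrow> bool" where
  "multiplication_module scale \<longleftrightarrow>
     (\<forall>N. submod scale N \<longrightarrow> (\<exists>I. ring_ideal I \<and> N = ideal_mult scale I UNIV))"

definition comultiplication_module :: "('a::comm_ring_1 \<Rightarrow> 'm::ab_group_add \<Rightarrow> 'm) \<Rightarrow> bool" where
  "comultiplication_module scale \<longleftrightarrow>
     (\<forall>K. submod scale K \<longrightarrow> K = colon_M scale (Ann scale K))"

definition semisimple_module :: "('a::comm_ring_1 \<Rightarrow> 'm::ab_group_add \<Rightarrow> 'm) \<Rightarrow> bool" where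
  "semisimple_module scale \<longleftrightarrow>
     module.span scale (\<Union>{S. simple_submod scale S}) = UNIV"

definition min_second_rep :: "('a::comm_ring_1 \<Rightarrow> 'm::ab_group_add \<Rightarrow> 'm) \<Rightarrow> nat \<Rightarrow> (nat \<Rightarrow> 'm set) \<Rightarrow> bool" where
  "min_second_rep scale n K \<longleftrightarrow>
     (\<forall>i<n. second_submod scale (K i)) \<and>
     module.span scale (\<Union>i<n. K i) = UNIV \<and>
     (\<forall>i<n. \<forall>j<n. i \<noteq> j \<longrightarrow> Ann scale (K i) \<noteq> Ann scale (K j)) \<and>
     (\<forall>j<n. \<not> K j \<subseteq> module.span scale (\<Union>i\<in>{..<n} - {j}. K i))"

definition Min_set :: "'x set set \<Rightarrow> 'x set set" where
  "Min_set X = {I \<in> X. \<forall>J\<in>X. J \<subseteq> I \<longrightarrow> J = I}"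

end

(* In a semisimple module r *s (r *s x) = 0 forces r *s x = 0, and every nonzero element of a
   simple submodule generates it; together with the primeness of the annihilator of a second
   submodule N this makes Ann N a maximal ideal. The distinct ideals Ann (K i) are therefore
   pairwise comaximal, and the Chinese remainder theorem yields ring elements proj i acting as the
   identity on K i and as zero on every other K j. So M is the direct sum of the K i with
   projections x \<mapsto> proj i *s x, every second submodule lies in some K i, and each of the four
   conditions is equivalent to all K i being simple. *)

theory Submission
  imports Defs
begin

lemma module_mult: "module ((*) :: 'a::comm_ring_1 \<Rightarrow> 'a \<Rightarrow> 'a)"
  by unfold_locales (auto simp: algebra_simps)

lemma ring_idealI:
  assumes "(0::'a::comm_ring_1) \<in> I" "\<And>x y. x \<in> I \<Longrightarrow> y \<in> I \<Longrightarrow> x + y \<in> I"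
    "\<And>c x. x \<in> I \<Longrightarrow> c * x \<in> I"
  shows "ring_ideal I"
  unfolding ring_ideal_def using assms by (simp add: module.subspace_def[OF module_mult])

lemma ring_ideal_principal:
  "ring_ideal (range (\<lambda>k. k * (r::'a::comm_ring_1)))" (is "ring_ideal ?I")
proof (rule ring_idealI)
  show "0 \<in> ?I" by (metis mult_zero_left rangeI)
  show "x + y \<in> ?I" if "x \<in> ?I" "y \<in> ?I" for x y
    using that by (auto, metis distrib_right rangeI)
  show "c * x \<in> ?I" if "x \<in> ?I" for c x
    using that by (auto, metis mult.assoc rangeI)
qed

context module
begin

lemma second_submod_subspace: "second_submod scale N \<Longrightarrow> subspace N"
  by (simp add: second_submod_def submod_def)

lemma second_submod_nonzero: "second_submod scale N \<Longrightarrow> \<exists>y\<in>N. y \<noteq> 0"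
  using subspace_0[OF second_submod_subspace] by (auto simp: second_submod_def)

lemma simple_submod_subspace: "simple_submod scale S \<Longrightarrow> subspace S"
  by (simp add: simple_submod_def submod_def)

lemma Ann_mult_left: "r \<in> Ann scale N \<Longrightarrow> a * r \<in> Ann scale N"
  by (simp add: Ann_def flip: scale_scale)

lemma Ann_add: "r \<in> Ann scale N \<Longrightarrow> s \<in> Ann scale N \<Longrightarrow> r + s \<in> Ann scale N"
  by (simp add: Ann_def scale_left_distrib)

lemma one_minus_Ann_fixes: "1 - c \<in> Ann scale N \<Longrightarrow> x \<in> N \<Longrightarrow> c *s x = x"
  by (simp add: Ann_def scale_left_diff_distrib)

lemma scale_prod_fixed:
  assumes "finite F" "\<And>j. j \<in> F \<Longrightarrow> f j *s x = x"
  shows "prod f F *s x = x"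
  using assms by (induction F rule: finite_induct) (simp_all flip: scale_scale)

lemma subspace_scale_kernel: "subspace {x. r *s x = 0}"
  using module_hom.subspace_kernel[OF module_hom_scale_self] .

lemma subspace_scale_preimage: "subspace N \<Longrightarrow> subspace {x. r *s x \<in> N}"
  using module_hom.subspace_linear_preimage[OF module_hom_scale_self] .

lemma simple_submod_subset:
  assumes "simple_submod scale S" "subspace L" "w \<in> L" "w \<in> S" "w \<noteq> 0"
  shows "S \<subseteq> L"
proof -
  have "submod scale (L \<inter> S)"
    using assms subspace_inter by (simp add: submod_def simple_submod_def)
  moreover have "L \<inter> S \<noteq> {0}" using assms by blast
  ultimately have "L \<inter> S = S" using assms(1) unfolding simple_submod_def by blast
  then show ?thesis by blast
qed

lemma simple_submod_cyclic:
  assumes S: "simple_submod scale S" and s: "s \<in> S" and rs: "r *s s \<noteq> 0"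
  shows "\<exists>u. u *s (r *s s) = s"
proof -
  have "S \<subseteq> span {r *s s}"
    using simple_submod_subset[OF S subspace_span span_base] s rs
      subspace_scale[OF simple_submod_subspace[OF S] s] by blast
  then obtain u where "s = (u * r) *s s" using s span_singleton by auto
  then show ?thesis by (metis scale_scale)
qed

lemma ideal_mult_subset:
  assumes "subspace N" "\<And>r x. r \<in> I \<Longrightarrow> r *s x \<in> N"
  shows "ideal_mult scale I UNIV \<subseteq> N"
  unfolding ideal_mult_def by (rule span_minimal) (use assms in auto)

lemma second_submod_scale_cases:
  assumes N: "second_submod scale N"
  shows "r \<in> Ann scale N \<or> N \<subseteq> scale r ` N"
proof -
  let ?I = "range (\<lambda>k. k * r)"
  have sub: "subspace N" using second_submod_subspace[OF N] .
  have "subspace (scale r ` N)"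
    using module_hom.subspace_image[OF module_hom_scale_self sub] .
  then have "ideal_mult scale ?I N \<subseteq> scale r ` N"
    unfolding ideal_mult_def
  proof (rule span_minimal[rotated], clarify)
    fix k z assume "z \<in> N"
    then have "k *s z \<in> N" using subspace_scale[OF sub] by blast
    moreover have "(k * r) *s z = r *s (k *s z)" by (simp add: mult.commute)
    ultimately show "(k * r) *s z \<in> scale r ` N" by blast
  qed
  moreover have "r *s z \<in> ideal_mult scale ?I N" if "z \<in> N" for z
  proof -
    have "r \<in> ?I" by (metis mult_1 rangeI)
    then show ?thesis unfolding ideal_mult_def using that by (blast intro: span_base)
  qed
  moreover have "ideal_mult scale ?I N = N \<or> ideal_mult scale ?I N = {0}"
    using N ring_ideal_principal[of r] by (simp add: second_submod_def)
  ultimately show ?thesis by (auto simp: Ann_def)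
qed

lemma simple_submod_eq:
  "simple_submod scale S \<Longrightarrow> subspace N \<Longrightarrow> N \<subseteq> S \<Longrightarrow> N \<noteq> {0} \<Longrightarrow> N = S"
  by (auto simp: simple_submod_def submod_def)

lemma ring_ideal_colon:
  assumes N: "subspace N"
  shows "ring_ideal {r. \<forall>x. r *s x \<in> N}" (is "ring_ideal ?I")
proof (rule ring_idealI)
  show "0 \<in> ?I" using subspace_0[OF N] by simp
  show "a + b \<in> ?I" if "a \<in> ?I" "b \<in> ?I" for a b
    using that subspace_add[OF N] by (simp add: scale_left_distrib)
  show "c * a \<in> ?I" if "a \<in> ?I" for c a
    using that subspace_scale[OF N] by (simp add: mult.commute[of c] flip: scale_scale)
qed

lemma one_notin_Ann_second: "second_submod scale N \<Longrightarrow> 1 \<notin> Ann scale N"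
  using second_submod_nonzero by (fastforce simp: Ann_def)

lemma Ann_second_prime:
  assumes N: "second_submod scale N" and ab: "a * b \<in> Ann scale N"
  shows "a \<in> Ann scale N \<or> b \<in> Ann scale N"
proof (cases "a \<in> Ann scale N")
  case False
  then have "N \<subseteq> scale a ` N" using second_submod_scale_cases[OF N] by blast
  then have "b *s x = 0" if "x \<in> N" for x
    using that ab by (auto simp: Ann_def mult.commute)
  then show ?thesis by (simp add: Ann_def)
qed simp

lemma second_submod_subset_ideal_mult:
  assumes N: "second_submod scale N" and r: "r \<in> I" "r \<notin> Ann scale N"
  shows "N \<subseteq> ideal_mult scale I UNIV"
proof -
  have "N \<subseteq> scale r ` N" using second_submod_scale_cases[OF N] r(2) by blast
  also have "\<dots> \<subseteq> ideal_mult scale I UNIV"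
    unfolding ideal_mult_def using r(1) by (blast intro: span_base)
  finally show ?thesis .
qed

end

locale semisimple = module +
  assumes semisimple: "semisimple_module scale"
begin

lemma semisimple_induct:
  assumes "subspace {x. P x}" "\<And>S s. simple_submod scale S \<Longrightarrow> s \<in> S \<Longrightarrow> P s"
  shows "P x"
proof -
  have "x \<in> span (\<Union>{S. simple_submod scale S})"
    using semisimple by (simp add: semisimple_module_def)
  then show ?thesis by (rule span_induct) (use assms in auto)
qed

lemma scale_regular: "\<exists>u. (u * r * r) *s x = r *s x"
proof (rule semisimple_induct[where P = "\<lambda>x. \<exists>u. (u * r * r) *s x = r *s x"])
  show "subspace {x. \<exists>u. (u * r * r) *s x = r *s x}"
  proof (rule subspaceI; unfold mem_Collect_eq)
    show "\<exists>u. (u * r * r) *s 0 = r *s (0::'b)" by simp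
  next
    fix y z :: 'b
    assume "\<exists>a. (a * r * r) *s y = r *s y" "\<exists>b. (b * r * r) *s z = r *s z"
    then obtain a b where a: "(a * r * r) *s y = r *s y" and b: "(b * r * r) *s z = r *s z"
      by blast
    let ?c = "a + b - a * b * r"
    have "(?c * r * r) *s y
        = (a * r * r) *s y + (b * r * r) *s y - (b * r) *s ((a * r * r) *s y)"
      by (simp add: scale_left_distrib scale_left_diff_distrib algebra_simps)
    also have "\<dots> = r *s y" using a by (simp add: mult.assoc)
    finally have cy: "(?c * r * r) *s y = r *s y" .
    have "(?c * r * r) *s z
        = (a * r * r) *s z + (b * r * r) *s z - (a * r) *s ((b * r * r) *s z)"
      by (simp add: scale_left_distrib scale_left_diff_distrib algebra_simps)
    also have "\<dots> = r *s z" using b by (simp add: mult.assoc)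
    finally have cz: "(?c * r * r) *s z = r *s z" .
    show "\<exists>u. (u * r * r) *s (y + z) = r *s (y + z)"
      using cy cz by (metis scale_right_distrib)
  next
    fix c y
    assume "\<exists>u. (u * r * r) *s y = r *s y"
    then show "\<exists>u. (u * r * r) *s (c *s y) = r *s (c *s y)"
      by (metis scale_left_commute)
  qed
next
  fix S s assume S: "simple_submod scale S" and s: "s \<in> S"
  show "\<exists>u. (u * r * r) *s s = r *s s"
  proof (cases "r *s s = 0")
    case False
    obtain u where u: "u *s (r *s s) = s" using simple_submod_cyclic[OF S s False] by blast
    have "r *s s = u *s (r *s (r *s s))" using u by (metis scale_left_commute)
    then have "r *s (r *s s) \<noteq> 0" using False by (metis scale_zero_right)
    moreover have "r *s s \<in> S" using subspace_scale[OF simple_submod_subspace[OF S] s] .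
    ultimately obtain v where "v *s (r *s (r *s s)) = r *s s"
      using simple_submod_cyclic[OF S] by blast
    then show ?thesis by (auto simp: mult.assoc)
  qed (auto intro: exI[of _ 0])
qed

lemma scale_square_eq_0: "r *s (r *s x) = 0 \<Longrightarrow> r *s x = 0"
  using scale_regular[of r x] by (metis mult.assoc scale_scale scale_zero_right)

lemma exists_annihilator_outside_prime:
  assumes one: "1 \<notin> p" and prime: "\<And>a b. a * b \<in> p \<Longrightarrow> a \<in> p \<or> b \<in> p"
    and simple: "\<And>S s. simple_submod scale S \<Longrightarrow> s \<in> S \<Longrightarrow> s \<noteq> 0 \<Longrightarrow>
      \<exists>r. r \<notin> p \<and> r *s s = 0"
  shows "\<exists>r. r \<notin> p \<and> r *s x = 0"
proof (rule semisimple_induct[where P = "\<lambda>x. \<exists>r. r \<notin> p \<and> r *s x = 0"])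
  show "subspace {x. \<exists>r. r \<notin> p \<and> r *s x = 0}"
  proof (rule subspaceI; unfold mem_Collect_eq)
    show "\<exists>r. r \<notin> p \<and> r *s (0::'b) = 0" by (rule exI[of _ 1]) (simp add: one)
  next
    fix y z
    assume "\<exists>r. r \<notin> p \<and> r *s y = 0" "\<exists>r. r \<notin> p \<and> r *s z = 0"
    then obtain a b where ab: "a \<notin> p" "a *s y = 0" "b \<notin> p" "b *s z = 0" by blast
    then have "(a * b) *s y = 0" "(a * b) *s z = 0"
      by (metis mult.commute scale_scale scale_zero_right)+
    moreover have "a * b \<notin> p" using ab prime by blast
    ultimately show "\<exists>r. r \<notin> p \<and> r *s (y + z) = 0" by (metis add_0 scale_right_distrib)
  next
    fix c y
    assume "\<exists>r. r \<notin> p \<and> r *s y = 0"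
    then obtain r where "r \<notin> p" "r *s y = 0" by blast
    then show "\<exists>r. r \<notin> p \<and> r *s (c *s y) = 0"
      by (metis scale_left_commute scale_zero_right)
  qed
next
  fix S s assume "simple_submod scale S" "s \<in> S"
  then show "\<exists>r. r \<notin> p \<and> r *s s = 0"
    using one simple by (cases "s = 0") (auto intro: exI[of _ 1])
qed

lemma Ann_second_maximal:
  assumes N: "second_submod scale N" and r: "r \<notin> Ann scale N"
  shows "\<exists>u. 1 - u * r \<in> Ann scale N"
proof -
  let ?p = "Ann scale N"
  (* Otherwise some t outside the prime Ann N kills a nonzero y = t *s z of N, so t kills
     t *s z, which semisimplicity forbids. *)
  have "\<exists>S s. simple_submod scale S \<and> s \<in> S \<and> s \<noteq> 0 \<and> (\<forall>t. t \<notin> ?p \<longrightarrow> t *s s \<noteq> 0)"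
  proof (rule ccontr)
    assume "\<not> ?thesis"
    then have simple: "\<And>S s. simple_submod scale S \<Longrightarrow> s \<in> S \<Longrightarrow> s \<noteq> 0 \<Longrightarrow>
        \<exists>t. t \<notin> ?p \<and> t *s s = 0"
      by blast
    obtain y where y: "y \<in> N" "y \<noteq> 0" using second_submod_nonzero[OF N] by blast
    have "\<exists>t. t \<notin> ?p \<and> t *s y = 0"
      by (rule exists_annihilator_outside_prime[OF one_notin_Ann_second[OF N]])
        (use Ann_second_prime[OF N] simple in blast)+
    then obtain t where t: "t \<notin> ?p" "t *s y = 0" by blast
    have "N \<subseteq> scale t ` N" using second_submod_scale_cases[OF N] t(1) by blast
    then obtain z where "y = t *s z" using y(1) by blast
    then show False using scale_square_eq_0[of t z] t(2) y(2) by simp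
  qed
  then obtain S s where S: "simple_submod scale S" "s \<in> S"
    and s: "\<And>t. t \<notin> ?p \<Longrightarrow> t *s s \<noteq> 0" by blast
  obtain u where "u *s (r *s s) = s" using simple_submod_cyclic[OF S s[OF r]] by blast
  then have "(1 - u * r) *s s = 0" by (simp add: scale_left_diff_distrib)
  then show ?thesis using s by blast
qed

lemma Ann_second_elem:
  assumes N: "second_submod scale N" and y: "y \<in> N" "y \<noteq> 0" "r *s y = 0"
  shows "r \<in> Ann scale N"
proof (rule ccontr)
  assume "r \<notin> Ann scale N"
  then obtain u where "1 - u * r \<in> Ann scale N" using Ann_second_maximal[OF N] by blast
  then have "(u * r) *s y = y" using one_minus_Ann_fixes y(1) by blast
  then show False using y by (metis scale_scale scale_zero_right)
qed

lemma Ann_second_comaximal: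
  assumes N: "second_submod scale N" and N': "second_submod scale N'"
    and ne: "Ann scale N \<noteq> Ann scale N'"
  shows "\<exists>c \<in> Ann scale N'. 1 - c \<in> Ann scale N"
proof -
  have "\<not> Ann scale N' \<subseteq> Ann scale N"
  proof
    assume sub: "Ann scale N' \<subseteq> Ann scale N"
    have "r \<in> Ann scale N'" if r: "r \<in> Ann scale N" for r
    proof (rule ccontr)
      assume "r \<notin> Ann scale N'"
      then obtain u where "1 - u * r \<in> Ann scale N" using Ann_second_maximal[OF N'] sub by blast
      then have "(1 - u * r) + u * r \<in> Ann scale N" using Ann_add Ann_mult_left[OF r] by blast
      then show False using one_notin_Ann_second[OF N] by simp
    qed
    then show False using sub ne by blast
  qed
  then obtain r where r: "r \<in> Ann scale N'" "r \<notin> Ann scale N" by blast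
  then obtain u where "1 - u * r \<in> Ann scale N" using Ann_second_maximal[OF N] by blast
  then show ?thesis using Ann_mult_left[OF r(1)] by blast
qed

lemma comultiplication_second_simple:
  assumes M: "comultiplication_module scale" and N: "second_submod scale N"
  shows "simple_submod scale N"
  unfolding simple_submod_def
proof (intro conjI allI impI)
  show "submod scale N" "N \<noteq> {0}" using N by (simp_all add: second_submod_def)
  fix L assume L: "submod scale L \<and> L \<subseteq> N"
  show "L = {0} \<or> L = N"
  proof (cases "L = {0}")
    case False
    then obtain y where y: "y \<in> L" "y \<noteq> 0" using L subspace_0 by (auto simp: submod_def)
    have "Ann scale L \<subseteq> Ann scale N"
      using Ann_second_elem[OF N] y L by (auto simp: Ann_def)
    then have "N \<subseteq> colon_M scale (Ann scale L)" by (auto simp: Ann_def colon_M_def)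
    also have "\<dots> = L" using M L by (simp add: comultiplication_module_def)
    finally show ?thesis using L by blast
  qed simp
qed

end

locale second_decomposition = semisimple +
  fixes n :: nat and K :: "nat \<Rightarrow> 'b set"
  assumes K_second: "i < n \<Longrightarrow> second_submod scale (K i)"
    and span_K: "span (\<Union>i<n. K i) = UNIV"
    and Ann_K_distinct: "i < n \<Longrightarrow> j < n \<Longrightarrow> i \<noteq> j \<Longrightarrow> Ann scale (K i) \<noteq> Ann scale (K j)"
begin

lemma K_subspace: "i < n \<Longrightarrow> subspace (K i)"
  using K_second second_submod_subspace by blast

definition sep :: "nat \<Rightarrow> nat \<Rightarrow> 'a" where
  "sep i j = (SOME c. c \<in> Ann scale (K j) \<and> 1 - c \<in> Ann scale (K i))"

lemma sep_mem_Ann: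
  "i < n \<Longrightarrow> j < n \<Longrightarrow> i \<noteq> j \<Longrightarrow> sep i j \<in> Ann scale (K j) \<and> 1 - sep i j \<in> Ann scale (K i)"
  unfolding sep_def
  by (rule someI_ex) (use Ann_second_comaximal[OF K_second K_second Ann_K_distinct] in blast)

(* The Chinese remainder element for the pairwise comaximal ideals Ann (K j): congruent to 1
   modulo Ann (K i) and to 0 modulo every other Ann (K j). *)
definition proj :: "nat \<Rightarrow> 'a" where
  "proj i = (\<Prod>j \<in> {..<n} - {i}. sep i j)"

lemma proj_fixes: "i < n \<Longrightarrow> x \<in> K i \<Longrightarrow> proj i *s x = x"
  unfolding proj_def using sep_mem_Ann one_minus_Ann_fixes by (intro scale_prod_fixed) (auto, blast)

lemma proj_Ann:
  assumes ij: "i < n" "j < n" "j \<noteq> i"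
  shows "proj i \<in> Ann scale (K j)"
proof -
  have "proj i = (\<Prod>k \<in> {..<n} - {i} - {j}. sep i k) * sep i j"
    unfolding proj_def using ij by (subst prod.remove[of _ j]) (auto simp: mult.commute)
  then show ?thesis using sep_mem_Ann[of i j] ij Ann_mult_left by auto
qed

lemma proj_kills: "i < n \<Longrightarrow> j < n \<Longrightarrow> j \<noteq> i \<Longrightarrow> x \<in> K j \<Longrightarrow> proj i *s x = 0"
  using proj_Ann by (auto simp: Ann_def)

lemma proj_in_K:
  assumes i: "i < n"
  shows "proj i *s x \<in> K i"
proof (rule span_induct[where P = "\<lambda>x. proj i *s x \<in> K i"])
  show "x \<in> span (\<Union>i<n. K i)" using span_K by simp
  show "subspace {x. proj i *s x \<in> K i}" using subspace_scale_preimage[OF K_subspace[OF i]] .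
  fix y assume "y \<in> (\<Union>i<n. K i)"
  then obtain j where j: "j < n" "y \<in> K j" by auto
  show "proj i *s y \<in> K i"
  proof (cases "j = i")
    case False
    then show ?thesis using proj_kills[OF i j(1) False j(2)] subspace_0[OF K_subspace[OF i]] by simp
  qed (use proj_fixes j in simp)
qed

lemma sum_proj: "(\<Sum>i<n. proj i *s x) = x"
proof (rule span_induct[where P = "\<lambda>x. (\<Sum>i<n. proj i *s x) = x"])
  show "x \<in> span (\<Union>i<n. K i)" using span_K by simp
  show "subspace {x. (\<Sum>i<n. proj i *s x) = x}"
  proof (rule subspaceI; unfold mem_Collect_eq)
    fix y z assume "(\<Sum>i<n. proj i *s y) = y" "(\<Sum>i<n. proj i *s z) = z"
    then show "(\<Sum>i<n. proj i *s (y + z)) = y + z" by (simp add: scale_right_distrib sum.distrib)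
  next
    fix c y assume y: "(\<Sum>i<n. proj i *s y) = y"
    have "(\<Sum>i<n. proj i *s (c *s y)) = (\<Sum>i<n. c *s (proj i *s y))"
      by (simp only: scale_left_commute[of c])
    also have "\<dots> = c *s y" using y by (simp only: flip: scale_sum_right)
    finally show "(\<Sum>i<n. proj i *s (c *s y)) = c *s y" .
  qed simp
next
  fix y assume "y \<in> (\<Union>i<n. K i)"
  then obtain j where j: "j < n" "y \<in> K j" by auto
  have "proj i *s y = (if i = j then y else 0)" if "i < n" for i
    using proj_fixes[OF that] proj_kills[OF that j(1)] j(2) by auto
  then have "(\<Sum>i<n. proj i *s y) = (\<Sum>i<n. if i = j then y else 0)" by simp
  then show "(\<Sum>i<n. proj i *s y) = y" using j by simp
qed

lemma exists_proj_nonzero: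
  assumes "x \<noteq> 0"
  shows "\<exists>i<n. proj i *s x \<noteq> 0"
proof (rule ccontr)
  assume "\<not> (\<exists>i<n. proj i *s x \<noteq> 0)"
  then have "(\<Sum>i<n. proj i *s x) = 0" by simp
  then show False using sum_proj[of x] assms by simp
qed

lemma second_submod_subset_K:
  assumes N: "second_submod scale N"
  shows "\<exists>i<n. N \<subseteq> K i"
proof -
  obtain y where y: "y \<in> N" "y \<noteq> 0" using second_submod_nonzero[OF N] by blast
  obtain i where i: "i < n" "proj i *s y \<noteq> 0" using exists_proj_nonzero[OF y(2)] by blast
  then have "proj i \<notin> Ann scale N" using y(1) by (auto simp: Ann_def)
  then have "N \<subseteq> scale (proj i) ` N" using second_submod_scale_cases[OF N] by blast
  also have "\<dots> \<subseteq> K i" using proj_in_K[OF i(1)] by blast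
  finally show ?thesis using i(1) by blast
qed

lemma proj_kills_ideal_mult:
  assumes i: "i < n" and I: "I \<subseteq> Ann scale (K i)" and z: "z \<in> ideal_mult scale I UNIV"
  shows "proj i *s z = 0"
proof (rule span_induct[where P = "\<lambda>z. proj i *s z = 0"])
  show "z \<in> span {scale r x | r x. r \<in> I \<and> x \<in> UNIV}" using z by (simp add: ideal_mult_def)
  show "subspace {z. proj i *s z = 0}" by (rule subspace_scale_kernel)
  fix w assume "w \<in> {scale r x | r x. r \<in> I \<and> x \<in> UNIV}"
  then obtain r x where w: "w = r *s x" and r: "r \<in> I" by blast
  have "r \<in> Ann scale (K i)" using r I by blast
  then have "r *s (proj i *s x) = 0" using proj_in_K[OF i] by (simp add: Ann_def del: scale_scale)
  then show "proj i *s w = 0" using w by (metis scale_left_commute)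
qed

lemma K_subset_if_proj_nonzero:
  assumes "simple_submod scale (K i)" "i < n" "subspace N" "x \<in> N" "proj i *s x \<noteq> 0"
  shows "K i \<subseteq> N"
  using simple_submod_subset[OF assms(1,3) subspace_scale[OF assms(3,4)] proj_in_K[OF assms(2)]]
    assms(5) .

abbreviation simple_components :: bool where
  "simple_components \<equiv> \<forall>i<n. simple_submod scale (K i)"

lemma multiplication_module_imp_simple_components:
  assumes M: "multiplication_module scale"
  shows simple_components
proof (intro allI impI)
  fix i assume i: "i < n"
  show "simple_submod scale (K i)"
    unfolding simple_submod_def
  proof (intro conjI allI impI)
    show "submod scale (K i)" "K i \<noteq> {0}" using K_second[OF i] by (simp_all add: second_submod_def)
    fix L assume L: "submod scale L \<and> L \<subseteq> K i"
    then obtain I where I: "L = ideal_mult scale I UNIV" using M by (auto simp: multiplication_module_def)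
    show "L = {0} \<or> L = K i"
    proof (cases "I \<subseteq> Ann scale (K i)")
      case True
      then have "z = 0" if "z \<in> L" for z
        using proj_kills_ideal_mult[OF i True, of z] proj_fixes[OF i, of z] that I L by auto
      then show ?thesis using L subspace_0 by (auto simp: submod_def)
    next
      case False
      then obtain r where "r \<in> I" "r \<notin> Ann scale (K i)" by blast
      then have "K i \<subseteq> L" using second_submod_subset_ideal_mult[OF K_second[OF i]] I by blast
      then show ?thesis using L by blast
    qed
  qed
qed

lemma simple_components_imp_multiplication_module:
  assumes D: simple_components
  shows "multiplication_module scale"
  unfolding multiplication_module_def
proof (intro allI impI)
  fix N assume "submod scale N"
  then have N: "subspace N" by (simp add: submod_def)
  define I where "I = {r. \<forall>x. r *s x \<in> N}"
  have "N \<subseteq> ideal_mult scale I UNIV"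
  proof
    fix z assume z: "z \<in> N"
    have "proj i *s z \<in> ideal_mult scale I UNIV" if i: "i < n" for i
    proof (cases "proj i *s z = 0")
      case False
      then have "K i \<subseteq> N" using K_subset_if_proj_nonzero D i N z by blast
      then have "proj i \<in> I" using proj_in_K[OF i] by (auto simp: I_def)
      then show ?thesis unfolding ideal_mult_def by (blast intro: span_base)
    qed (simp add: ideal_mult_def span_zero)
    then have "(\<Sum>i<n. proj i *s z) \<in> ideal_mult scale I UNIV"
      unfolding ideal_mult_def by (intro span_sum) simp
    then show "z \<in> ideal_mult scale I UNIV" using sum_proj by simp
  qed
  moreover have "ideal_mult scale I UNIV \<subseteq> N" by (rule ideal_mult_subset[OF N]) (simp add: I_def)
  ultimately show "\<exists>I. ring_ideal I \<and> N = ideal_mult scale I UNIV"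
    using ring_ideal_colon[OF N] unfolding I_def by blast
qed

lemma K_ps_hollow:
  assumes i: "i < n"
  shows "ps_hollow scale (K i)"
  unfolding ps_hollow_def
proof (intro conjI allI impI)
  show "submod scale (K i)" "K i \<noteq> {0}" using K_second[OF i] by (simp_all add: second_submod_def)
  fix I L assume IL: "ring_ideal I \<and> submod scale L"
    and cover: "K i \<subseteq> sum_submod (ideal_mult scale I UNIV) L"
  show "K i \<subseteq> ideal_mult scale I UNIV \<or> K i \<subseteq> L"
  proof (cases "I \<subseteq> Ann scale (K i)")
    case True
    have "w \<in> L" if w: "w \<in> K i" for w
    proof -
      obtain a b where ab: "w = a + b" "a \<in> ideal_mult scale I UNIV" "b \<in> L"
        using cover w by (auto simp: sum_submod_def)
      have "w = proj i *s w" using proj_fixes[OF i w] by simp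
      also have "\<dots> = proj i *s b"
        using proj_kills_ideal_mult[OF i True ab(2)] ab(1) by (simp add: scale_right_distrib)
      finally show ?thesis using IL ab(3) subspace_scale by (auto simp: submod_def)
    qed
    then show ?thesis by blast
  next
    case False
    then show ?thesis using second_submod_subset_ideal_mult[OF K_second[OF i]] by blast
  qed
qed

lemma simple_components_imp_ps_hollow_simple:
  assumes D: simple_components and N: "ps_hollow scale N"
  shows "simple_submod scale N"
proof -
  have sub: "subspace N" and nz: "N \<noteq> {0}" using N by (simp_all add: ps_hollow_def submod_def)
  then obtain y where y: "y \<in> N" "y \<noteq> 0" using subspace_0 by blast
  obtain i where i: "i < n" "proj i *s y \<noteq> 0" using exists_proj_nonzero[OF y(2)] by blast
  let ?I = "range (\<lambda>k. k * proj i)"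
  let ?L = "{x. proj i *s x = 0}"
  have "N \<subseteq> sum_submod (ideal_mult scale ?I UNIV) ?L"
  proof
    fix w assume "w \<in> N"
    have "proj i \<in> ?I" by (metis mult_1 rangeI)
    then have "proj i *s w \<in> ideal_mult scale ?I UNIV"
      unfolding ideal_mult_def by (blast intro: span_base)
    moreover have "w - proj i *s w \<in> ?L"
      using proj_fixes[OF i(1) proj_in_K[OF i(1)]] by (simp add: scale_right_diff_distrib)
    moreover have "w = proj i *s w + (w - proj i *s w)" by simp
    ultimately show "w \<in> sum_submod (ideal_mult scale ?I UNIV) ?L"
      unfolding sum_submod_def by blast
  qed
  then have "N \<subseteq> ideal_mult scale ?I UNIV \<or> N \<subseteq> ?L"
    using N ring_ideal_principal[of "proj i"] subspace_scale_kernel[of "proj i"]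
    by (simp add: ps_hollow_def submod_def)
  then have "N \<subseteq> ideal_mult scale ?I UNIV" using y i by auto
  also have "\<dots> \<subseteq> K i"
    using subspace_scale[OF K_subspace[OF i(1)] proj_in_K[OF i(1)]]
    by (intro ideal_mult_subset[OF K_subspace[OF i(1)]]) (auto simp flip: scale_scale)
  finally have "N = K i" using simple_submod_eq D i sub nz by blast
  then show ?thesis using D i by simp
qed

lemma simple_components_imp_second_simple:
  assumes D: simple_components and N: "second_submod scale N"
  shows "simple_submod scale N"
proof -
  obtain i where "i < n" "N \<subseteq> K i" using second_submod_subset_K[OF N] by blast
  then have "N = K i"
    using simple_submod_eq D N second_submod_subspace by (auto simp: second_submod_def)
  then show ?thesis using D \<open>i < n\<close> by simp
qed

lemma simple_components_imp_comultiplication_module: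
  assumes D: simple_components
  shows "comultiplication_module scale"
  unfolding comultiplication_module_def
proof (intro allI impI)
  fix N assume "submod scale N"
  then have N: "subspace N" by (simp add: submod_def)
  have "x \<in> N" if x: "x \<in> colon_M scale (Ann scale N)" for x
  proof -
    have "proj i *s x \<in> N" if i: "i < n" for i
    proof (cases "\<exists>y\<in>N. proj i *s y \<noteq> 0")
      case True
      then have "K i \<subseteq> N" using K_subset_if_proj_nonzero D i N by blast
      then show ?thesis using proj_in_K[OF i] by blast
    next
      case False
      then have "proj i \<in> Ann scale N" by (auto simp: Ann_def)
      then show ?thesis using x subspace_0[OF N] by (auto simp: colon_M_def)
    qed
    then have "(\<Sum>i<n. proj i *s x) \<in> N" by (intro subspace_sum[OF N]) simp
    then show ?thesis using sum_proj by simp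
  qed
  then show "N = colon_M scale (Ann scale N)" by (auto simp: colon_M_def Ann_def)
qed

lemma multiplication_module_iff_simple_components:
  "multiplication_module scale \<longleftrightarrow> simple_components"
  using multiplication_module_imp_simple_components simple_components_imp_multiplication_module
  by blast

lemma ps_hollow_simple_iff_simple_components:
  "(\<forall>N. ps_hollow scale N \<longrightarrow> simple_submod scale N) \<longleftrightarrow> simple_components"
  using K_ps_hollow simple_components_imp_ps_hollow_simple by blast

lemma second_simple_iff_simple_components:
  "(\<forall>N. second_submod scale N \<longrightarrow> simple_submod scale N) \<longleftrightarrow> simple_components"
  using K_second simple_components_imp_second_simple by blast

lemma comultiplication_module_iff_simple_components:
  "comultiplication_module scale \<longleftrightarrow> simple_components"
  using comultiplication_second_simple K_second simple_components_imp_comultiplication_module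
  by blast

end

theorem corollary5p19:
  fixes scale :: "'a::comm_ring_1 \<Rightarrow> 'm::ab_group_add \<Rightarrow> 'm"
    and n :: nat and K :: "nat \<Rightarrow> 'm set"
  assumes "module scale"
    and "semisimple_module scale"
    and "min_second_rep scale n K"
    and "Ann scale ` K ` {..<n} = Min_set (Ann scale ` K ` {..<n})"
  shows "(multiplication_module scale \<longleftrightarrow> (\<forall>N. ps_hollow scale N \<longrightarrow> simple_submod scale N))
       \<and> ((\<forall>N. ps_hollow scale N \<longrightarrow> simple_submod scale N) \<longleftrightarrow> (\<forall>N. second_submod scale N \<longrightarrow> simple_submod scale N))
       \<and> ((\<forall>N. second_submod scale N \<longrightarrow> simple_submod scale N) \<longleftrightarrow> comultiplication_module scale)"
proof -
  interpret second_decomposition scale n K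
    using assms(3)
    by (intro second_decomposition.intro semisimple.intro semisimple_axioms.intro
        second_decomposition_axioms.intro assms(1,2)) (auto simp: min_second_rep_def)
  show ?thesis
    using multiplication_module_iff_simple_components ps_hollow_simple_iff_simple_components
      second_simple_iff_simple_components comultiplication_module_iff_simple_components
    by blast
qed

end
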